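(* For any $s\ge1$, let $\hat{\mathbf{w}}_s$ be the solution of $\mathrm{DS}(\hat\gamma_s)$. Let $S_s\subseteq[d]$ satisfy $|S_s|=k$ and $|\hat w_{s,i}|\ge|\hat w_{s,j}|$ for every $i\in S_s$ and $j\in[d]\setminus S_s$. Let $\mathbf{w}_s=\mathbf{w}^\ast(S\cap S_s)$. Then $\|\mathbf{w}_s-\mathbf{w}^\ast\|_1\le\|\hat{\mathbf{w}}_s-\mathbf{w}^\ast\|_1$.
   Context: Setting. Integers $d,k$ with $3\le k\le d-3$, horizon $T$. At each round $t$ an instance $\mathbf{x}_t\in\mathbb{R}^d$ with $\|\mathbf{x}_t\|_\infty\le1$ arrives, of which the learner observes at most $k$ coordinates; $y_t=\langle\mathbf{w}^\ast,\mathbf{x}_t\rangle+\eta_t$ with $\eta_t$ independent $\mathcal{N}(0,\sigma^2)$ and $\|\mathbf{w}^\ast\|_1\le1$, and $\|\mathbf{w}^\ast\|_0\le k$. $S=\mathrm{Supp}(\mathbf{w}^\ast)$. $\mathbf{u}(A)$ is $\mathbf{u}$ with coordinates outside $A$ zeroed. $g_{d,k}=\frac{(d-1)(d-2)}{(k-1)(k-2)}$. SAMPLING$(k,d,\mathbf{w})$: draw $I_1\in[d]$ with probability $|w_i|/\|\mathbf{w}\|_1$, then $k-1$ distinct indices uniformly without replacement from $[d]\setminus\{I_1\}$; return the $k$-set. Exploration rounds $t=s^2$: $B_s=$SAMPLING$(k,d,\hat{\mathbf{w}}_{s-1})$ (with $\hat{\mathbf{w}}_0=\frac1d\mathbf{1}_d$);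 observe $x_{t,i}$, $i\in B_s$, and $y_t$. With $\mathbb{P}$ the probability over $B_s$ given the past, $\hat x_{t,i}=\frac{x_{t,i}}{\mathbb{P}[i\in B_s]}\mathbb{I}_{i\in B_s}$, $h_t[i,i]=\frac{x_{t,i}^2}{\mathbb{P}[i\in B_s]}\mathbb{I}_{i\in B_s}$, $h_t[i,j]=\frac{x_{t,i}x_{t,j}}{\mathbb{P}[i,j\in B_s]}\mathbb{I}_{i,j\in B_s}$; $\hat{\mathbf{X}}_{\mathcal{I}_s}\mathbf{Y}_{\mathcal{I}_s}=\sum_{\tau=1}^s\hat{\mathbf{x}}_{\tau^2}y_{\tau^2}$, $\mathbf{H}_{\mathcal{I}_s}=\sum_{\tau=1}^s\mathbf{h}_{\tau^2}$. $\mathrm{DS}(\gamma)$ is the program: minimize $\|\mathbf{w}\|_1$ over $\mathbf{w}\in\mathbb{R}^d$ subject to $\|\frac1s\hat{\mathbf{X}}_{\mathcal{I}_s}\mathbf{Y}_{\mathcal{I}_s}-\frac1s\mathbf{H}_{\mathcal{I}_s}\mathbf{w}\|_\infty\le\gamma$, and $\hat\gamma_s>0$ is the algorithm's data-dependent threshold at exploration index $s$. *)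

theory Defs
  imports Complex_Main
begin

text \<open>Vectors in R^d are functions nat => real vanishing outside [d] = {0..<d}.\<close>

definition is_vec :: "nat \<Rightarrow> (nat \<Rightarrow> real) \<Rightarrow> bool" where
  "is_vec d u \<longleftrightarrow> (\<forall>i\<ge>d. u i = 0)"

definition l1norm :: "nat \<Rightarrow> (nat \<Rightarrow> real) \<Rightarrow> real" where
  "l1norm d u = (\<Sum>i<d. \<bar>u i\<bar>)"

definition linfnorm :: "nat \<Rightarrow> (nat \<Rightarrow> real) \<Rightarrow> real" where
  "linfnorm d u = Max ((\<lambda>i. \<bar>u i\<bar>) ` {..<d})"

definition supp_vec :: "nat \<Rightarrow> (nat \<Rightarrow> real) \<Rightarrow> nat set" where
  "supp_vec d u = {i \<in> {..<d}. u i \<noteq> 0}"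

definition restrict_vec :: "(nat \<Rightarrow> real) \<Rightarrow> nat set \<Rightarrow> (nat \<Rightarrow> real)" where
  "restrict_vec u A = (\<lambda>i. if i \<in> A then u i else 0)"

text \<open>Feasibility / optimality for the Dantzig-selector program DS(gamma):
  minimize ||w||_1 subject to ||c - H w||_inf <= gamma, where c = (1/s) X Y and
  H = (1/s) H_I are the (given) empirical data.\<close>
definition DS_feasible :: "nat \<Rightarrow> (nat \<Rightarrow> real) \<Rightarrow> (nat \<Rightarrow> nat \<Rightarrow> real) \<Rightarrow> real \<Rightarrow> (nat \<Rightarrow> real) \<Rightarrow> bool" where
  "DS_feasible d c H \<gamma> w \<longleftrightarrow> linfnorm d (\<lambda>i. c i - (\<Sum>j<d. H i j * w j)) \<le> \<gamma>"

definition DS_solution :: "nat \<Rightarrow> (nat \<Rightarrow> real) \<Rightarrow> (nat \<Rightarrow> nat \<Rightarrow> real) \<Rightarrow> real \<Rightarrow> (nat \<Rightarrow> real) \<Rightarrow> bool" where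
  "DS_solution d c H \<gamma> w \<longleftrightarrow> is_vec d w \<and> DS_feasible d c H \<gamma> w \<and>
     (\<forall>v. is_vec d v \<and> DS_feasible d c H \<gamma> v \<longrightarrow> l1norm d w \<le> l1norm d v)"

end

theory Submission
  imports Defs
begin

text \<open>Truncating w* to S \<inter> Ss loses exactly the mass of w* on S - Ss. For i in S - Ss,
  |w*_i| \<le> |what_i - w*_i| + |what_i|. Since |S| \<le> k = |Ss|, the set S - Ss is no larger
  than Ss - S, and every coordinate of what in Ss dominates every one outside Ss; so the
  mass of what on S - Ss is at most its mass on Ss - S, where w* vanishes and what equals
  the error what - w*. The two pieces of error live on the disjoint sets S - Ss and Ss - S.\<close>

lemma sum_le_sum_if_card_le_dominated:
  fixes a :: "'a \<Rightarrow> 'b::ordered_comm_monoid_add"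
  assumes "finite A" "finite B" "card A \<le> card B"
    and "\<And>i j. i \<in> A \<Longrightarrow> j \<in> B \<Longrightarrow> a i \<le> a j"
    and "\<And>j. j \<in> B \<Longrightarrow> 0 \<le> a j"
  shows "sum a A \<le> sum a B"
proof -
  obtain f where f: "f ` A \<subseteq> B" "inj_on f A"
    using card_le_inj[OF assms(1-3)] by blast
  have "sum a A \<le> sum (a \<circ> f) A"
    using f(1) assms(4) by (intro sum_mono) auto
  also have "\<dots> = sum a (f ` A)"
    using f(2) by (simp add: sum.reindex)
  also have "\<dots> \<le> sum a B"
    using f(1) assms(2,5) by (intro sum_mono2) auto
  finally show ?thesis .
qed

lemma card_Diff_le_card_Diff:
  assumes "finite A" "finite B" "card A \<le> card B"
  shows "card (A - B) \<le> card (B - A)"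
  using assms card_Diff_subset_Int[of A B] card_Diff_subset_Int[of B A]
  by (simp add: Int_commute)

lemma sum_abs_missed_le_sum_abs_error:
  fixes u v :: "'a \<Rightarrow> real"
  assumes "finite U" "S \<subseteq> U" "T \<subseteq> U" "card S \<le> card T"
    and "\<And>i. i \<notin> S \<Longrightarrow> u i = 0"
    and "\<forall>i\<in>T. \<forall>j\<in>U - T. \<bar>v i\<bar> \<ge> \<bar>v j\<bar>"
  shows "(\<Sum>i\<in>S - T. \<bar>u i\<bar>) \<le> (\<Sum>i\<in>U. \<bar>v i - u i\<bar>)"
proof -
  have fin: "finite S" "finite T"
    using assms(1-3) finite_subset by auto
  have "(\<Sum>i\<in>S - T. \<bar>u i\<bar>) \<le> (\<Sum>i\<in>S - T. \<bar>v i - u i\<bar> + \<bar>v i\<bar>)"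
    by (intro sum_mono) auto
  also have "\<dots> = (\<Sum>i\<in>S - T. \<bar>v i - u i\<bar>) + (\<Sum>i\<in>S - T. \<bar>v i\<bar>)"
    by (simp add: sum.distrib)
  also have "\<dots> \<le> (\<Sum>i\<in>S - T. \<bar>v i - u i\<bar>) + (\<Sum>i\<in>T - S. \<bar>v i\<bar>)"
    using fin assms(2,4,6)
    by (intro add_left_mono sum_le_sum_if_card_le_dominated card_Diff_le_card_Diff) auto
  also have "(\<Sum>i\<in>T - S. \<bar>v i\<bar>) = (\<Sum>i\<in>T - S. \<bar>v i - u i\<bar>)"
    using assms(5) by (intro sum.cong) auto
  also have "(\<Sum>i\<in>S - T. \<bar>v i - u i\<bar>) + \<dots> = (\<Sum>i\<in>(S - T) \<union> (T - S). \<bar>v i - u i\<bar>)"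
    using fin by (simp add: sum.union_disjoint Diff_Int_distrib2)
  also have "\<dots> \<le> (\<Sum>i\<in>U. \<bar>v i - u i\<bar>)"
    using assms(1-3) by (intro sum_mono2) auto
  finally show ?thesis .
qed

lemma l1norm_restrict_vec_error:
  assumes "\<And>i. i \<notin> S \<Longrightarrow> u i = 0" "S \<subseteq> {..<d}"
  shows "l1norm d (\<lambda>i. restrict_vec u (S \<inter> T) i - u i) = (\<Sum>i\<in>S - T. \<bar>u i\<bar>)"
proof -
  have "l1norm d (\<lambda>i. restrict_vec u (S \<inter> T) i - u i)
      = (\<Sum>i<d. if i \<in> S - T then \<bar>u i\<bar> else 0)"
    unfolding l1norm_def using assms(1) by (intro sum.cong) (auto simp: restrict_vec_def)
  also have "\<dots> = (\<Sum>i\<in>{..<d} \<inter> (S - T). \<bar>u i\<bar>)"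
    by (rule sum.inter_restrict[symmetric]) simp
  also have "{..<d} \<inter> (S - T) = S - T"
    using assms(2) by blast
  finally show ?thesis .
qed

theorem lemma5:
  fixes d k s :: nat and wstar what :: "nat \<Rightarrow> real"
    and c :: "nat \<Rightarrow> real" and H :: "nat \<Rightarrow> nat \<Rightarrow> real" and \<gamma> :: real
    and Ss :: "nat set"
  assumes "3 \<le> k" and "k + 3 \<le> d" and "1 \<le> s"
    and "is_vec d wstar" and "l1norm d wstar \<le> 1" and "card (supp_vec d wstar) \<le> k"
    and "\<gamma> > 0"
    and "DS_solution d c H \<gamma> what"
    and "Ss \<subseteq> {..<d}" and "card Ss = k"
    and "\<forall>i\<in>Ss. \<forall>j\<in>{..<d} - Ss. \<bar>what i\<bar> \<ge> \<bar>what j\<bar>"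
  shows "l1norm d (\<lambda>i. restrict_vec wstar (supp_vec d wstar \<inter> Ss) i - wstar i)
           \<le> l1norm d (\<lambda>i. what i - wstar i)"
proof -
  let ?S = "supp_vec d wstar"
  have supp: "?S \<subseteq> {..<d}"
    by (auto simp: supp_vec_def)
  have outside: "wstar i = 0" if "i \<notin> ?S" for i
    using that \<open>is_vec d wstar\<close> by (auto simp: supp_vec_def is_vec_def not_less)
  have "l1norm d (\<lambda>i. restrict_vec wstar (?S \<inter> Ss) i - wstar i) = (\<Sum>i\<in>?S - Ss. \<bar>wstar i\<bar>)"
    using outside supp by (rule l1norm_restrict_vec_error)
  also have "\<dots> \<le> l1norm d (\<lambda>i. what i - wstar i)"
    unfolding l1norm_def using supp assms(6,9-11) outside
    by (intro sum_abs_missed_le_sum_abs_error) auto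
  finally show ?thesis .
qed

end
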